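(* Let $3\le a<b$ be integers and for $z\in(0,1)$ let $g(z,a,b)=f(z)(b-1)(a-1)+\frac{1}{1-z}+2-b-a$. Then: (i) as a function of $z\in(0,1)$, $g$ is strictly decreasing, attains a global minimum, and is strictly increasing afterwards; the global minimum point is the only point where $\partial g/\partial z=0$; (ii) $g(z)>0$ for all $z\in(0,z_l]$; (iii) $g(z)>0$ for all $z\in[z_r,1)$; (iv) if $\min_{z} g(z)<0$, then $g$ has exactly two roots $z_1<z_2$ in $(0,1)$, and $z_1,z_2\in(z_l,z_r)$; (v) for every $z\in(z_l,1)$, $g(z,a,b)>g(z,a,b+1)$; (vi) for each fixed $a\ge3$ there is a threshold $b'\ge a+1$ such that $\min_z g(z,a,b)\ge 0$ for all $b$ with $a<b<b'$, and $\min_z g(z,a,b)<0$ for all $b\ge b'$.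
   Context: $f(z)=\frac{-\ln(1-z)(1-z)}{z}$ for $z\in(0,1)$ (a strictly decreasing bijection onto $(0,1)$). $z_l$ is the unique $z\in(0,1)$ with $f(z)=\frac1{a-1}$, and $z_r$ the unique $z\in(0,1)$ with $f(z)=\frac1{b-1}$ (these depend on $a$, resp. $b$). *)

theory Defs
  imports "HOL-Analysis.Analysis"
begin

definition f :: "real \<Rightarrow> real" where
  "f z = - ln (1 - z) * (1 - z) / z"

definition zsol :: "real \<Rightarrow> real" where
  "zsol c = (THE z. 0 < z \<and> z < 1 \<and> f z = 1 / (c - 1))"

definition zl :: "real \<Rightarrow> real" where "zl a = zsol a"
definition zr :: "real \<Rightarrow> real" where "zr b = zsol b"

definition g :: "real \<Rightarrow> real \<Rightarrow> real \<Rightarrow> real" where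
  "g z a b = f z * (b - 1) * (a - 1) + 1 / (1 - z) + 2 - b - a"

definition gmin :: "real \<Rightarrow> real \<Rightarrow> real" where
  "gmin a b = (INF z\<in>{0<..<1}. g z a b)"

end

theory Submission
  imports Defs
begin

(*
  Write phi(z) = -ln(1-z) - z > z^2/2.  Then f' = -phi/z^2 < 0, so f is a strictly
  decreasing map of (0,1) onto (0,1), and z_l, z_r are well defined.  With
  kk(z) = (1-z)^2 phi(z)/z^2, strictly decreasing and taking every value in (0,1/4),
      g' = (1 - (a-1)(b-1) kk(z)) / (1-z)^2 ;
  so g' vanishes exactly at the m with kk(m) = 1/((a-1)(b-1)), is negative before and
  positive after m: part (i), valid whenever (a-1)(b-1) > 4.  Parts (ii)-(iv) follow from
      g = ((a-1)f - 1)((b-1)f - 1)/f + (1/(1-z) - 1/f),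
  whose last summand is positive since f(z) > 1-z: the product is >= 0 outside (z_l,z_r),
  and a negative minimum gives one root on each side of m by the intermediate value
  theorem.  Part (v) is the identity g(z,a,b) - g(z,a,b+1) = 1 - (a-1)f(z).  For (vi), (v)
  propagates negativity of min g from b to b+1, and min g < 0 for large b because
  g(z,a,b) -> -infinity for fixed z in (z_l,1); a least integer threshold then exists.
*)

lemma strict_mono_on_by_deriv:
  fixes h h' :: "real \<Rightarrow> real"
  assumes I: "is_interval I"
    and deriv: "\<And>x. x \<in> I \<Longrightarrow> (h has_real_derivative h' x) (at x)"
    and pos: "\<And>x. x \<in> interior I \<Longrightarrow> h' x > 0"
  shows "strict_mono_on I h"
proof (rule strict_mono_onI)
  fix r s assume rs: "r \<in> I" "s \<in> I" "r < s"
  have closed_sub: "{r..s} \<subseteq> I" using I rs unfolding is_interval_1 atLeastAtMost_iff subset_iff by blast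
  then have open_sub: "{r<..<s} \<subseteq> interior I" by (intro interior_maximal) auto
  show "h r < h s"
  proof (rule DERIV_pos_imp_increasing_open[OF rs(3)])
    fix x assume "r < x" "x < s"
    then have "x \<in> I" "x \<in> interior I" using closed_sub open_sub by auto
    then show "\<exists>y. (h has_real_derivative y) (at x) \<and> 0 < y"
      using deriv pos by blast
  next
    have "isCont h x" if "x \<in> {r..s}" for x
      using that closed_sub deriv DERIV_isCont by blast
    then show "continuous_on {r..s} h" by (simp add: continuous_at_imp_continuous_on)
  qed
qed

lemma strict_antimono_on_by_deriv:
  fixes h h' :: "real \<Rightarrow> real"
  assumes I: "is_interval I"
    and deriv: "\<And>x. x \<in> I \<Longrightarrow> (h has_real_derivative h' x) (at x)"
    and neg: "\<And>x. x \<in> interior I \<Longrightarrow> h' x < 0"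
  shows "strict_antimono_on I h"
proof -
  have "strict_mono_on I (\<lambda>x. - h x)"
    using I by (rule strict_mono_on_by_deriv) (use deriv neg in \<open>auto intro: DERIV_minus\<close>)
  then show ?thesis by (simp add: monotone_on_def)
qed

lemma strict_antimono_on_less:
  fixes h :: "'a::linorder \<Rightarrow> 'b::linordered_ab_group_add"
  assumes "strict_antimono_on S h" "x \<in> S" "y \<in> S"
  shows "h x < h y \<longleftrightarrow> y < x"
proof -
  have "strict_mono_on S (\<lambda>x. - h x)" using assms(1) by (simp add: monotone_on_def)
  then show ?thesis using strict_mono_on_less[of S "\<lambda>x. - h x" y x] assms by simp
qed

lemma strict_antimono_on_less_eq:
  fixes h :: "'a::linorder \<Rightarrow> 'b::linordered_ab_group_add"
  assumes "strict_antimono_on S h" "x \<in> S" "y \<in> S"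
  shows "h x \<le> h y \<longleftrightarrow> y \<le> x"
  using strict_antimono_on_less[OF assms(1) assms(3,2)] by (simp add: not_less[symmetric])

lemma attains_level_in_unit_interval:
  fixes h :: "real \<Rightarrow> real"
  assumes cont: "\<And>x. 0 < x \<Longrightarrow> x < 1 \<Longrightarrow> isCont h x"
    and lu: "0 < l" "l \<le> u" "u < 1" and between: "h u \<le> t" "t \<le> h l"
  shows "\<exists>z. 0 < z \<and> z < 1 \<and> h z = t"
proof -
  have "\<exists>z. l \<le> z \<and> z \<le> u \<and> h z = t"
    using between lu(2) by (rule IVT2) (use cont lu in auto)
  then obtain z where "l \<le> z" "z \<le> u" "h z = t" by blast
  then show ?thesis using lu by (intro exI[of _ z]) auto
qed

definition phi :: "real \<Rightarrow> real" where "phi z = - ln (1 - z) - z"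

lemma phi_deriv: "z < 1 \<Longrightarrow> (phi has_real_derivative z / (1 - z)) (at z)"
  unfolding phi_def
  by (rule derivative_eq_intros refl | simp)+ (simp add: field_simps)

text \<open>The second-order lower bound phi(z) > z^2/2, the source of every inequality below.\<close>

lemma phi_gt_half_square:
  assumes "0 < z" "z < 1"
  shows "phi z > z^2 / 2"
proof -
  define s where "s w = phi w - w^2 / 2" for w
  have "strict_mono_on {0..<1} s"
  proof (rule strict_mono_on_by_deriv)
    show "(s has_real_derivative w^2 / (1 - w)) (at w)" if "w \<in> {0..<1}" for w
      unfolding s_def[abs_def] using that
      by (auto intro!: derivative_eq_intros phi_deriv simp: field_simps power2_eq_square)
  qed (auto simp: is_interval_convex_1)
  then have "s 0 < s z" using strict_mono_onD[of "{0..<1}" s 0 z] assms by simp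
  then show ?thesis by (simp add: s_def phi_def)
qed

lemma phi_pos:
  assumes "0 < z" "z < 1"
  shows "phi z > 0"
proof -
  have "0 < z^2 / 2" using assms by simp
  then show ?thesis using phi_gt_half_square[OF assms] by linarith
qed

lemma f_phi: "f z = (phi z + z) * (1 - z) / z"
  by (simp add: f_def phi_def)

lemma f_deriv: "0 < z \<Longrightarrow> z < 1 \<Longrightarrow> (f has_real_derivative - phi z / z^2) (at z)"
  unfolding f_def[abs_def] phi_def
  by (rule derivative_eq_intros refl | simp)+ (simp add: field_simps power2_eq_square)

lemma f_isCont: "0 < z \<Longrightarrow> z < 1 \<Longrightarrow> isCont f z"
  by (rule DERIV_isCont[OF f_deriv])

lemma f_strict_antimono: "strict_antimono_on {0<..<1} f"
  by (rule strict_antimono_on_by_deriv[where h' = "\<lambda>z. - phi z / z^2"])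
     (use f_deriv phi_pos in \<open>auto simp: is_interval_convex_1\<close>)

lemma f_less_iff: "0 < z \<Longrightarrow> z < 1 \<Longrightarrow> 0 < w \<Longrightarrow> w < 1 \<Longrightarrow> f z < f w \<longleftrightarrow> w < z"
  using strict_antimono_on_less[OF f_strict_antimono, of z w] by simp

lemma f_le_iff: "0 < z \<Longrightarrow> z < 1 \<Longrightarrow> 0 < w \<Longrightarrow> w < 1 \<Longrightarrow> f z \<le> f w \<longleftrightarrow> w \<le> z"
  using strict_antimono_on_less_eq[OF f_strict_antimono, of z w] by simp

lemma f_gt_one_minus:
  assumes "0 < z" "z < 1"
  shows "f z > 1 - z"
proof -
  have "(phi z + z) * (1 - z) / z > z * (1 - z) / z"
    using phi_pos[OF assms] assms by (intro divide_strict_right_mono mult_strict_right_mono) auto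
  then show ?thesis using assms by (simp add: f_phi)
qed

lemma f_pos: "0 < z \<Longrightarrow> z < 1 \<Longrightarrow> f z > 0"
  using f_gt_one_minus[of z] by simp

lemma f_above_level:
  assumes "0 < t" "t < 1"
  shows "f ((1 - t) / 2) > t"
proof -
  define z where "z = (1 - t) / 2"
  have z: "0 < z" "z < 1" "1 - z > t" using assms unfolding z_def by (auto simp: field_simps)
  have "1 - z \<le> (z / 2 + 1) * (1 - z)" using z by (simp add: algebra_simps)
  also have "\<dots> = (z^2 / 2 + z) * (1 - z) / z"
    using z by (simp add: field_simps power2_eq_square)
  also have "\<dots> < f z"
    unfolding f_phi using phi_gt_half_square[OF z(1,2)] z
    by (intro divide_strict_right_mono mult_strict_right_mono) auto
  finally show ?thesis using z(3) by (simp add: z_def)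
qed

lemma f_below_level:
  assumes "0 < t" "t < 1"
  shows "f (1 - (t / 4)^2) < t"
proof -
  define u where "u = (t / 4)^2"
  have u: "0 < u" "u \<le> 1 / 16"
    using assms mult_strict_mono[of t 1 t 1] by (auto simp: u_def power2_eq_square)
  have "- ln u = 2 * ln (4 / t)"
    using assms by (simp add: u_def ln_realpow ln_div)
  moreover have "ln (4 / t) < 4 / t" using assms by (intro ln_less_self) simp
  moreover have "8 / t = 2 * (4 / t)" by simp
  ultimately have log_bound: "- ln u < 8 / t" by linarith
  have "f (1 - u) = (- ln u) * u / (1 - u)" by (simp add: f_def)
  also have "\<dots> < (8 / t) * u / (1 - u)"
    using log_bound u by (intro divide_strict_right_mono mult_strict_right_mono) auto
  also have "(8 / t) * u = t / 2" using assms by (simp add: u_def field_simps power2_eq_square)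
  also have "t / 2 / (1 - u) \<le> t" using u assms by (simp add: field_simps)
  finally show ?thesis by (simp add: u_def)
qed

lemma f_attains_level:
  assumes "0 < t" "t < 1"
  shows "\<exists>z. 0 < z \<and> z < 1 \<and> f z = t"
proof (rule attains_level_in_unit_interval[OF f_isCont])
  show "(1 - t) / 2 \<le> 1 - (t / 4)^2"
    using assms mult_strict_mono[of t 1 t 1] by (simp add: power2_eq_square)
  show "f (1 - (t / 4)^2) \<le> t" "t \<le> f ((1 - t) / 2)"
    using f_below_level[OF assms] f_above_level[OF assms] by auto
qed (use assms in auto)

lemma zsol_props:
  assumes "2 < c"
  shows "0 < zsol c \<and> zsol c < 1 \<and> f (zsol c) = 1 / (c - 1)"
proof -
  have "0 < 1 / (c - 1)" "1 / (c - 1) < 1" using assms by (auto simp: field_simps)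
  then obtain z where z: "0 < z" "z < 1" "f z = 1 / (c - 1)" using f_attains_level by blast
  have "inj_on f {0<..<1}" using f_strict_antimono strict_antimono_iff_antimono by blast
  then have "\<exists>!z. 0 < z \<and> z < 1 \<and> f z = 1 / (c - 1)"
    using z by (intro ex1I[of _ z]) (auto simp: inj_on_def)
  then show ?thesis unfolding zsol_def by (rule theI')
qed

lemma zl_props: "2 < a \<Longrightarrow> 0 < zl a \<and> zl a < 1 \<and> f (zl a) = 1 / (a - 1)"
  unfolding zl_def by (rule zsol_props)

lemma zr_props: "2 < b \<Longrightarrow> 0 < zr b \<and> zr b < 1 \<and> f (zr b) = 1 / (b - 1)"
  unfolding zr_def by (rule zsol_props)

text \<open>The function kk = -(1-z)^2 f'(z) governs the sign of the derivative of g.  It is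
  strictly decreasing on (0,1) and takes every value 1/P with P > 4.\<close>

definition kk :: "real \<Rightarrow> real" where "kk z = (1 - z)^2 * phi z / z^2"

lemma kk_deriv:
  "0 < z \<Longrightarrow> z < 1 \<Longrightarrow> (kk has_real_derivative (1 - z) * (z^2 - 2 * phi z) / z^3) (at z)"
  unfolding kk_def[abs_def]
  by (rule derivative_eq_intros refl phi_deriv | simp)+ (simp add: field_simps eval_nat_numeral)

lemma kk_isCont: "0 < z \<Longrightarrow> z < 1 \<Longrightarrow> isCont kk z"
  by (rule DERIV_isCont[OF kk_deriv])

lemma kk_strict_antimono: "strict_antimono_on {0<..<1} kk"
proof (rule strict_antimono_on_by_deriv[where h' = "\<lambda>z. (1 - z) * (z^2 - 2 * phi z) / z^3"])
  show "(1 - z) * (z^2 - 2 * phi z) / z^3 < 0" if "z \<in> interior {0<..<1}" for z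
    using that phi_gt_half_square[of z] by (intro divide_neg_pos mult_pos_neg) auto
qed (auto simp: is_interval_convex_1 intro: kk_deriv)

lemma kk_gt: "0 < z \<Longrightarrow> z < 1 \<Longrightarrow> kk z > (1 - z)^2 / 2"
  using phi_gt_half_square[of z] mult_strict_left_mono[of "z^2/2" "phi z" "(1 - z)^2"]
  by (simp add: kk_def field_simps)

lemma kk_near_one:
  assumes "0 < u" "u \<le> 1 / 2"
  shows "kk (1 - u) < 4 * u"
proof -
  have "phi (1 - u) = ln (1 / u) - (1 - u)" using assms by (simp add: phi_def ln_div)
  also have "\<dots> < 1 / u"
  proof -
    have "ln (1 / u) < 1 / u" using assms by (intro ln_less_self) simp
    then show ?thesis using assms by linarith
  qed
  finally have phi_bound: "phi (1 - u) < 1 / u" .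
  have "kk (1 - u) = u^2 * phi (1 - u) / (1 - u)^2" by (simp add: kk_def)
  also have "\<dots> < u^2 * (1 / u) / (1 - u)^2"
    using phi_bound assms by (intro divide_strict_right_mono mult_strict_left_mono) auto
  also have "\<dots> = u / (1 - u)^2" using assms by (simp add: power2_eq_square)
  also have "\<dots> \<le> u / (1 / 4)"
  proof -
    have "(1 / 2)^2 \<le> (1 - u)^2" using assms by (intro power_mono) auto
    then have "1 / 4 \<le> (1 - u)^2" by (simp add: power2_eq_square)
    then show ?thesis using assms by (intro divide_left_mono) auto
  qed
  finally show ?thesis by simp
qed

lemma kk_attains:
  assumes "4 < P"
  shows "\<exists>m. 0 < m \<and> m < 1 \<and> kk m = 1 / P"
proof -
  define u where "u = 1 / (4 * P)"
  have u: "0 < u" "u \<le> 1 / 16" using assms by (auto simp: u_def field_simps)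
  show ?thesis
  proof (rule attains_level_in_unit_interval[OF kk_isCont, of "1 / 4" "1 - u"])
    show "kk (1 - u) \<le> 1 / P" using kk_near_one[of u] u by (simp add: u_def)
    have "kk (1 / 4) > 9 / 32" using kk_gt[of "1/4"] by (simp add: power2_eq_square)
    moreover have "1 / P < 1 / 4" using assms by (simp add: field_simps)
    ultimately show "1 / P \<le> kk (1 / 4)" by linarith
  qed (use u in auto)
qed

lemma g_deriv:
  assumes "0 < z" "z < 1"
  shows "((\<lambda>w. g w a b) has_real_derivative (1 - (a - 1) * (b - 1) * kk z) / (1 - z)^2) (at z)"
proof -
  have "((\<lambda>w. g w a b) has_real_derivative (- phi z / z^2) * (b - 1) * (a - 1) + 1 / (1 - z)^2) (at z)"
    unfolding g_def using assms
    by (auto intro!: derivative_eq_intros f_deriv simp: power2_eq_square field_simps)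
  moreover have "(- phi z / z^2) * (b - 1) * (a - 1) + 1 / (1 - z)^2
      = (1 - (a - 1) * (b - 1) * kk z) / (1 - z)^2"
    using assms by (simp add: kk_def field_simps)
  ultimately show ?thesis by simp
qed

lemma g_unimodal:
  fixes a b :: real
  assumes P: "4 < (a - 1) * (b - 1)"
  obtains m where "0 < m" "m < 1"
    "strict_antimono_on {0<..m} (\<lambda>z. g z a b)"
    "strict_mono_on {m..<1} (\<lambda>z. g z a b)"
    "\<forall>z\<in>{0<..<1}. g m a b \<le> g z a b"
    "\<forall>z\<in>{0<..<1}. deriv (\<lambda>w. g w a b) z = 0 \<longleftrightarrow> z = m"
    "gmin a b = g m a b"
proof -
  define Q where "Q = (a - 1) * (b - 1)"
  obtain m where m: "0 < m" "m < 1" "kk m = 1 / Q" using kk_attains P unfolding Q_def by blast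
  define D where "D z = Q * (kk m - kk z) / (1 - z)^2" for z
  have "0 < Q" using P by (simp add: Q_def)
  then have level: "1 - Q * kk z = Q * (kk m - kk z)" for z
    using m(3) by (simp add: right_diff_distrib)
  have g_has_D: "((\<lambda>w. g w a b) has_real_derivative D z) (at z)" if "0 < z" "z < 1" for z
    using g_deriv[OF that, of a b, folded Q_def] unfolding D_def level[symmetric] .
  have D_neg: "D z < 0" if "0 < z" "z < m" for z
  proof -
    have "kk m < kk z" using strict_antimono_on_less[OF kk_strict_antimono, of m z] that m by simp
    then show ?thesis using \<open>0 < Q\<close> that m unfolding D_def
      by (intro divide_neg_pos mult_pos_neg) auto
  qed
  have D_pos: "D z > 0" if "m < z" "z < 1" for z
  proof -
    have "kk z < kk m" using strict_antimono_on_less[OF kk_strict_antimono, of z m] that m by simp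
    then show ?thesis using \<open>0 < Q\<close> that unfolding D_def by (intro divide_pos_pos) auto
  qed
  have anti: "strict_antimono_on {0<..m} (\<lambda>z. g z a b)"
    by (rule strict_antimono_on_by_deriv[where h' = D]) (use m g_has_D D_neg in \<open>auto simp: is_interval_convex_1\<close>)
  have mono: "strict_mono_on {m..<1} (\<lambda>z. g z a b)"
    by (rule strict_mono_on_by_deriv[where h' = D]) (use m g_has_D D_pos in \<open>auto simp: is_interval_convex_1\<close>)
  have min: "\<forall>z\<in>{0<..<1}. g m a b \<le> g z a b"
  proof
    fix z :: real assume z: "z \<in> {0<..<1}"
    show "g m a b \<le> g z a b"
    proof (cases "z \<le> m")
      case True
      then show ?thesis using strict_antimono_on_less_eq[OF anti, of m z] z m by simp
    next
      case False
      then show ?thesis using strict_mono_on_less_eq[OF mono, of m z] z m by simp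
    qed
  qed
  have crit: "\<forall>z\<in>{0<..<1}. deriv (\<lambda>w. g w a b) z = 0 \<longleftrightarrow> z = m"
  proof
    fix z :: real assume z: "z \<in> {0<..<1}"
    then have "deriv (\<lambda>w. g w a b) z = D z" using g_has_D by (intro DERIV_imp_deriv) auto
    then show "deriv (\<lambda>w. g w a b) z = 0 \<longleftrightarrow> z = m"
      using D_neg[of z] D_pos[of z] z by (cases z m rule: linorder_cases) (auto simp: D_def)
  qed
  have "gmin a b = g m a b"
    unfolding gmin_def using min m
    by (intro antisym cINF_greatest cINF_lower) (auto intro: bdd_belowI2)
  with that m anti mono min crit show ?thesis by blast
qed

lemma g_isCont: "0 < z \<Longrightarrow> z < 1 \<Longrightarrow> isCont (\<lambda>w. g w a b) z"
  by (rule DERIV_isCont[OF g_deriv])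

lemma unimodal_condition: "3 \<le> a \<Longrightarrow> a < b \<Longrightarrow> 4 < (a - 1) * (b - 1 :: real)"
  using mult_le_less_imp_less[of 2 "a - 1" 2 "b - 1"] by simp

lemma gmin_le: "4 < (a - 1) * (b - 1) \<Longrightarrow> 0 < z \<Longrightarrow> z < 1 \<Longrightarrow> gmin a b \<le> g z a b"
  by (rule g_unimodal) auto

lemma g_factorisation:
  assumes "0 < z" "z < 1"
  shows "g z a b = ((a - 1) * f z - 1) * ((b - 1) * f z - 1) / f z + (1 / (1 - z) - 1 / f z)"
  using f_pos[OF assms] unfolding g_def by (simp add: field_simps)

lemma g_gap_pos: "0 < z \<Longrightarrow> z < 1 \<Longrightarrow> 1 / (1 - z) - 1 / f z > 0"
  using f_gt_one_minus[of z] by (simp add: divide_strict_left_mono)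

text \<open>Part (ii): on (0, z_l] both factors are nonnegative.\<close>

lemma g_pos_left:
  fixes a b :: real
  assumes "2 < a" "a \<le> b" "0 < z" "z \<le> zl a"
  shows "g z a b > 0"
proof -
  note zl = zl_props[OF assms(1)]
  have z: "0 < z" "z < 1" using zl assms by auto
  have "f z \<ge> 1 / (a - 1)" using f_le_iff[of "zl a" z] zl z assms by auto
  then have first: "(a - 1) * f z \<ge> 1" using assms by (simp add: field_simps)
  moreover have "(b - 1) * f z \<ge> (a - 1) * f z" using f_pos[OF z] assms by simp
  ultimately have "((a - 1) * f z - 1) * ((b - 1) * f z - 1) \<ge> 0" by simp
  then have "((a - 1) * f z - 1) * ((b - 1) * f z - 1) / f z \<ge> 0" using f_pos[OF z] by simp
  then show ?thesis using g_factorisation[OF z, of a b] g_gap_pos[OF z] by linarith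
qed

text \<open>Part (iii): on [z_r, 1) both factors are nonpositive.\<close>

lemma g_pos_right:
  fixes a b :: real
  assumes "2 < a" "a \<le> b" "zr b \<le> z" "z < 1"
  shows "g z a b > 0"
proof -
  note zr = zr_props[of b]
  have z: "0 < z" "z < 1" using zr assms by auto
  have "f z \<le> 1 / (b - 1)" using f_le_iff[of z "zr b"] zr z assms by auto
  then have second: "(b - 1) * f z \<le> 1" using assms by (simp add: field_simps)
  moreover have "(a - 1) * f z \<le> (b - 1) * f z" using f_pos[OF z] assms by simp
  ultimately have "((a - 1) * f z - 1) * ((b - 1) * f z - 1) \<ge> 0"
    by (intro mult_nonpos_nonpos) auto
  then have "((a - 1) * f z - 1) * ((b - 1) * f z - 1) / f z \<ge> 0" using f_pos[OF z] by simp
  then show ?thesis using g_factorisation[OF z, of a b] g_gap_pos[OF z] by linarith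
qed

text \<open>Part (iv): a negative minimum of a unimodal g forces exactly two roots, one on each side
  of the minimum point, and by (ii), (iii) they lie strictly between z_l and z_r.\<close>

lemma g_two_roots:
  fixes a b m :: real
  assumes ab: "2 < a" "a \<le> b" and m: "0 < m" "m < 1"
    and anti: "strict_antimono_on {0<..m} (\<lambda>z. g z a b)"
    and mono: "strict_mono_on {m..<1} (\<lambda>z. g z a b)"
    and neg: "g m a b < 0"
  shows "\<exists>z1 z2. z1 < z2 \<and> {z\<in>{0<..<1}. g z a b = 0} = {z1, z2} \<and> zl a < z1 \<and> z2 < zr b"
proof -
  note zl = zl_props[OF ab(1)]
  have zr: "0 < zr b" "zr b < 1" using zr_props[of b] ab by auto
  have g_zl: "g (zl a) a b > 0" and g_zr: "g (zr b) a b > 0"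
    using g_pos_left[OF ab] g_pos_right[OF ab] zl zr by auto
  have "zl a < m" using g_pos_left[OF ab m(1)] neg by force
  moreover have "m < zr b" using g_pos_right[OF ab _ m(2)] neg by force
  ultimately have cont: "\<forall>z. zl a \<le> z \<and> z \<le> zr b \<longrightarrow> isCont (\<lambda>w. g w a b) z"
    using zl zr by (auto intro!: g_isCont)
  have "\<exists>z. zl a \<le> z \<and> z \<le> m \<and> g z a b = 0"
    using neg g_zl \<open>zl a < m\<close> \<open>m < zr b\<close> cont by (intro IVT2) auto
  then obtain z1 where z1: "zl a \<le> z1" "z1 \<le> m" "g z1 a b = 0" by blast
  have "\<exists>z. m \<le> z \<and> z \<le> zr b \<and> g z a b = 0"
    using neg g_zr \<open>zl a < m\<close> \<open>m < zr b\<close> cont by (intro IVT) auto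
  then obtain z2 where z2: "m \<le> z2" "z2 \<le> zr b" "g z2 a b = 0" by blast
  have z1_strict: "zl a < z1" "z1 < m" and z2_strict: "m < z2" "z2 < zr b"
    using z1 z2 g_zl g_zr neg by (auto simp: order_le_less)
  have inj_left: "inj_on (\<lambda>z. g z a b) {0<..m}" using anti strict_antimono_iff_antimono by blast
  have inj_right: "inj_on (\<lambda>z. g z a b) {m..<1}" using mono strict_mono_on_imp_inj_on by blast
  have "{z\<in>{0<..<1}. g z a b = 0} = {z1, z2}"
  proof (intro set_eqI iffI)
    fix z assume "z \<in> {z\<in>{0<..<1}. g z a b = 0}"
    then have z: "0 < z" "z < 1" "g z a b = 0" by auto
    show "z \<in> {z1, z2}"
    proof (cases "z \<le> m")
      case True
      then have "z = z1" using inj_onD[OF inj_left, of z z1] z z1 z1_strict zl by force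
      then show ?thesis by simp
    next
      case False
      then have "z = z2" using inj_onD[OF inj_right, of z z2] z z2 z2_strict zr by force
      then show ?thesis by simp
    qed
  qed (use z1 z2 z1_strict z2_strict zl zr in auto)
  then show ?thesis using z1_strict z2_strict by (intro exI conjI) auto
qed

text \<open>Part (v): g(z,a,b) - g(z,a,b+1) = 1 - (a-1) f(z), which is positive exactly for z > z_l.\<close>

lemma g_decreasing_in_b:
  fixes a b :: real
  assumes "2 < a" "zl a < z" "z < 1"
  shows "g z a b > g z a (b + 1)"
proof -
  note zl = zl_props[OF assms(1)]
  have "f z < 1 / (a - 1)" using f_less_iff[of z "zl a"] zl assms by auto
  then have "(a - 1) * f z < 1" using assms by (simp add: field_simps)
  then show ?thesis unfolding g_def by (simp add: algebra_simps)
qed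

lemma g_properties:
  fixes a b :: real
  assumes ab: "3 \<le> a" "a < b"
  shows "(\<exists>m. 0 < m \<and> m < 1 \<and>
        strict_antimono_on {0<..m} (\<lambda>z. g z a b) \<and>
        strict_mono_on {m..<1} (\<lambda>z. g z a b) \<and>
        (\<forall>z\<in>{0<..<1}. g m a b \<le> g z a b) \<and>
        (\<forall>z\<in>{0<..<1}. deriv (\<lambda>w. g w a b) z = 0 \<longleftrightarrow> z = m))
   \<and> (\<forall>z. 0 < z \<and> z \<le> zl a \<longrightarrow> g z a b > 0)
   \<and> (\<forall>z. zr b \<le> z \<and> z < 1 \<longrightarrow> g z a b > 0)
   \<and> (gmin a b < 0 \<longrightarrow>
        (\<exists>z1 z2. z1 < z2 \<and> {z\<in>{0<..<1}. g z a b = 0} = {z1, z2} \<and> zl a < z1 \<and> z2 < zr b))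
   \<and> (\<forall>z. zl a < z \<and> z < 1 \<longrightarrow> g z a b > g z a (b + 1))"
proof -
  have a2: "2 < a" and ab': "a \<le> b" using ab by auto
  obtain m where m: "0 < m" "m < 1"
    "strict_antimono_on {0<..m} (\<lambda>z. g z a b)" "strict_mono_on {m..<1} (\<lambda>z. g z a b)"
    "\<forall>z\<in>{0<..<1}. g m a b \<le> g z a b"
    "\<forall>z\<in>{0<..<1}. deriv (\<lambda>w. g w a b) z = 0 \<longleftrightarrow> z = m"
    "gmin a b = g m a b"
    using g_unimodal[OF unimodal_condition[OF ab]] by blast
  show ?thesis
    using m g_pos_left[OF a2 ab'] g_pos_right[OF a2 ab'] g_decreasing_in_b[OF a2]
      g_two_roots[OF a2 ab' m(1-4), folded m(7)] by (intro conjI) blast+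
qed

lemma gmin_neg_step:
  fixes a b :: real
  assumes ab: "3 \<le> a" "a < b" and neg: "gmin a b < 0"
  shows "gmin a (b + 1) < 0"
proof -
  obtain m where m: "0 < m" "m < 1" "gmin a b = g m a b"
    using g_unimodal[OF unimodal_condition[OF ab]] by metis
  have "zl a < m" using g_pos_left[of a b m] ab neg m by force
  then have "g m a (b + 1) < g m a b" using g_decreasing_in_b[of a m b] ab m by simp
  moreover have "gmin a (b + 1) \<le> g m a (b + 1)"
    using unimodal_condition[of a "b + 1"] ab m by (intro gmin_le) auto
  ultimately show ?thesis using neg m(3) by linarith
qed

lemma gmin_eventually_neg:
  fixes a :: real
  assumes a: "3 \<le> a"
  shows "\<exists>B. \<forall>b\<ge>B. gmin a b < 0"
proof -
  note zl = zl_props[of a]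
  define w where "w = (zl a + 1) / 2"
  have w: "0 < w" "w < 1" "zl a < w" using zl a by (auto simp: w_def)
  define c where "c = 1 - (a - 1) * f w"
  have "f w < 1 / (a - 1)" using f_less_iff[of w "zl a"] zl w a by auto
  then have c: "0 < c" using a by (simp add: c_def field_simps)
  have "gmin a b < 0" if b: "max (a + 1) (2 + 1 / ((1 - w) * c)) \<le> b" for b
  proof -
    have "1 / (1 - w) = 1 / ((1 - w) * c) * c" using c w by (simp add: field_simps)
    also have "\<dots> < (b - 1) * c"
      using b c by (intro mult_strict_right_mono) auto
    finally have "1 / (1 - w) < (b - 1) * c" .
    moreover have "g w a b = - (b - 1) * c + 1 / (1 - w) - (a - 1)"
      by (simp add: g_def c_def algebra_simps)
    moreover have "gmin a b \<le> g w a b"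
      using unimodal_condition[of a b] a b w by (intro gmin_le) auto
    ultimately show ?thesis using a by linarith
  qed
  then show ?thesis by blast
qed

lemma int_threshold:
  fixes P :: "int \<Rightarrow> bool" and a c :: int
  assumes step: "\<And>b. a < b \<Longrightarrow> P b \<Longrightarrow> P (b + 1)" and c: "a < c" "P c"
  shows "\<exists>b'. a + 1 \<le> b' \<and> (\<forall>b. a < b \<and> b < b' \<longrightarrow> \<not> P b) \<and> (\<forall>b. b' \<le> b \<longrightarrow> P b)"
proof -
  define n0 where "n0 = (LEAST n::nat. P (a + 1 + int n))"
  have "P (a + 1 + int (nat (c - a - 1)))" using c by simp
  then have base: "P (a + 1 + int n0)" unfolding n0_def by (rule LeastI)
  have below: "\<not> P b" if "a < b" "b < a + 1 + int n0" for b
  proof -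
    have "nat (b - a - 1) < n0" using that by linarith
    then have "\<not> P (a + 1 + int (nat (b - a - 1)))" unfolding n0_def by (rule not_less_Least)
    then show ?thesis using that by simp
  qed
  have above: "P b" if "a + 1 + int n0 \<le> b" for b
    using that base by (induction b rule: int_ge_induct) (auto intro: step)
  show ?thesis using below above by (intro exI[of _ "a + 1 + int n0"]) auto
qed

theorem lemma2:
  fixes a :: int
  assumes "3 \<le> a"
  shows "(\<forall>b::int. a < b \<longrightarrow>
     (\<exists>m. 0 < m \<and> m < 1 \<and>
        strict_antimono_on {0<..m} (\<lambda>z. g z (real_of_int a) (real_of_int b)) \<and>
        strict_mono_on {m..<1} (\<lambda>z. g z (real_of_int a) (real_of_int b)) \<and>
        (\<forall>z\<in>{0<..<1}. g m (real_of_int a) (real_of_int b) \<le> g z (real_of_int a) (real_of_int b)) \<and>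
        (\<forall>z\<in>{0<..<1}. deriv (\<lambda>w. g w (real_of_int a) (real_of_int b)) z = 0 \<longleftrightarrow> z = m))
   \<and> (\<forall>z. 0 < z \<and> z \<le> zl (real_of_int a) \<longrightarrow> g z (real_of_int a) (real_of_int b) > 0)
   \<and> (\<forall>z. zr (real_of_int b) \<le> z \<and> z < 1 \<longrightarrow> g z (real_of_int a) (real_of_int b) > 0)
   \<and> (gmin (real_of_int a) (real_of_int b) < 0 \<longrightarrow>
        (\<exists>z1 z2. z1 < z2 \<and>
           {z\<in>{0<..<1}. g z (real_of_int a) (real_of_int b) = 0} = {z1, z2} \<and>
           zl (real_of_int a) < z1 \<and> z2 < zr (real_of_int b)))
   \<and> (\<forall>z. zl (real_of_int a) < z \<and> z < 1 \<longrightarrow>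
        g z (real_of_int a) (real_of_int b) > g z (real_of_int a) (real_of_int (b + 1))))
  \<and> (\<exists>b'::int. b' \<ge> a + 1 \<and>
       (\<forall>b::int. a < b \<and> b < b' \<longrightarrow> gmin (real_of_int a) (real_of_int b) \<ge> 0) \<and>
       (\<forall>b::int. b \<ge> b' \<longrightarrow> gmin (real_of_int a) (real_of_int b) < 0))"
proof -
  have a3: "3 \<le> real_of_int a" using assms by simp
  obtain B where B: "\<forall>b\<ge>B. gmin (real_of_int a) b < 0" using gmin_eventually_neg[OF a3] by blast
  have "B \<le> real_of_int (max (a + 1) \<lceil>B\<rceil>)"
    by (metis le_of_int_ceiling max.cobounded2 of_int_le_iff order_trans)
  then have threshold: "\<exists>b'. a + 1 \<le> b' \<and>
      (\<forall>b. a < b \<and> b < b' \<longrightarrow> \<not> gmin (real_of_int a) (real_of_int b) < 0) \<and>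
      (\<forall>b. b' \<le> b \<longrightarrow> gmin (real_of_int a) (real_of_int b) < 0)"
    using B gmin_neg_step[of "real_of_int a"] a3
    by (intro int_threshold[of a _ "max (a + 1) \<lceil>B\<rceil>"]) auto
  show ?thesis
  proof (rule conjI, goal_cases parts_i_to_v part_vi)
    case parts_i_to_v
    show ?case using g_properties[OF a3, where b = "real_of_int b" for b] by simp
  next
    case part_vi
    show ?case using threshold by (simp add: not_less)
  qed
qed

end
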